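(* Let $\mathsf p,\mathsf q$ be self-adjoint on $L^2(\mathbb R)$ with $\mathsf p\mathsf q-\mathsf q\mathsf p=(2\pi\mathsf i)^{-1}$, realized by $\langle x|\mathsf q=x\langle x|$, $\langle x|\mathsf p=\frac{1}{2\pi\mathsf i}\partial_x\langle x|$, and for $s\ge0$ let $|\alpha_s\rangle$ be given by $\langle x|\alpha_s\rangle=\frac{\varphi_b(s-x-c_b+\mathsf i0)}{\varphi_b(s+x+c_b-\mathsf i0)}e^{-2\pi\mathsf i(x+c_b)s}$. Then \[ \bigl(e^{2\pi b\mathsf p}+2\cosh(2\pi b\mathsf q)\bigr)|\alpha_s\rangle=2\cosh(2\pi bs)\,|\alpha_s\rangle . \]
   Context: $b\in\mathbb C$ with $\operatorname{Re}b>0$, $\operatorname{Im}b\ge0$, $c_b=\mathsf i(b+b^{-1})/2$. $\varphi_b$ is the non-compact quantum dilogarithm: $\varphi_b(z)=\exp(-\frac14\int_{\mathbb R}\frac{e^{-2\mathsf izx}dx}{\sinh(xb)\sinh(x/b)x})$ for $|\operatorname{Im}z|<\operatorname{Im}c_b$ (contour above $x=0$), extended meromorphically by $\varphi_b(z+\mathsf ib^{\pm1}/2)=(1+e^{2\pi zb^{\pm1}})\varphi_b(z-\mathsf ib^{\pm1}/2)$. *)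

theory Defs
  imports "HOL-Analysis.Analysis"
begin

definition cb :: "complex \<Rightarrow> complex" where
  "cb b = \<i> * (b + 1 / b) / 2"

definition qd_integrand :: "complex \<Rightarrow> complex \<Rightarrow> complex \<Rightarrow> complex" where
  "qd_integrand b z x = exp (- 2 * \<i> * z * x) / (sinh (x * b) * sinh (x / b) * x)"

text \<open>phi is the non-compact quantum dilogarithm phi_b, with S its (closed, discrete)
  set of singularities: phi is holomorphic off S, given by the integral over the
  contour R + i eps (eps > 0 below the nearest nonzero poles of the integrand, i.e.
  "above x = 0") on the strip |Im z| < Im c_b, and satisfies the functional equations.\<close>
definition is_qdilog :: "complex \<Rightarrow> (complex \<Rightarrow> complex) \<Rightarrow> complex set \<Rightarrow> bool" where
  "is_qdilog b phi S \<longleftrightarrow>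
     (\<forall>z. \<not> z islimpt S) \<and>
     phi holomorphic_on (- S) \<and>
     (\<forall>z::complex. \<bar>Im z\<bar> < Im (cb b) \<longrightarrow>
        (\<forall>eps::real. 0 < eps \<and> eps < pi * min (Re b) (Re b / (cmod b)\<^sup>2) \<longrightarrow>
           phi z = exp (- (1/4) * integral UNIV
                     (\<lambda>t::real. qd_integrand b z (complex_of_real t + \<i> * complex_of_real eps))))) \<and>
     (\<forall>z::complex. z + \<i> * b / 2 \<notin> S \<and> z - \<i> * b / 2 \<notin> S \<longrightarrow>
        phi (z + \<i> * b / 2) = (1 + exp (2 * of_real pi * z * b)) * phi (z - \<i> * b / 2)) \<and>
     (\<forall>z::complex. z + \<i> / b / 2 \<notin> S \<and> z - \<i> / b / 2 \<notin> S \<longrightarrow>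
        phi (z + \<i> / b / 2) = (1 + exp (2 * of_real pi * z / b)) * phi (z - \<i> / b / 2))"

definition alpha :: "complex \<Rightarrow> (complex \<Rightarrow> complex) \<Rightarrow> real \<Rightarrow> complex \<Rightarrow> complex" where
  "alpha b phi s x = phi (of_real s - x - cb b) / phi (of_real s + x + cb b)
                     * exp (- 2 * of_real pi * \<i> * (x + cb b) * of_real s)"

definition alpha_regular :: "complex \<Rightarrow> (complex \<Rightarrow> complex) \<Rightarrow> complex set \<Rightarrow> real \<Rightarrow> complex \<Rightarrow> bool" where
  "alpha_regular b phi S s x \<longleftrightarrow>
     of_real s - x - cb b \<notin> S \<and> of_real s + x + cb b \<notin> S \<and> phi (of_real s + x + cb b) \<noteq> 0"

end

theory Submission
  imports Defs
begin

(* In position representation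
   exp(2 pi b p) acts as the shift x -> x - i b, so the claim is the
   difference equation
     alpha(x - i b) + 2 cosh(2 pi b x) alpha(x) = 2 cosh(2 pi b s) alpha(x).
   Proof: one step of the functional equation of phi_b, shifting by i b,
   relates the numerator phi(s - x - c_b) and the denominator
   phi(s + x + c_b) of alpha at x - i b to those at x.  Because of the offset
   c_b the exponential factors simplify to -u/v and -u v, where
   u = exp(2 pi b s) and v = exp(2 pi b x); the plane-wave factor contributes
   1/u.  Hence alpha(x - i b) = alpha(x) (1 - u/v)(1 - u v)/u, and the claim
   reduces to the Laurent-polynomial identity
     (1 - u/v)(1 - u v)/u + v + 1/v = u + 1/u. *)

lemma two_cosh_eq_exp: "2 * cosh (z::complex) = exp z + exp (- z)"
  using cosh_plus_sinh[of z] cosh_minus_sinh[of z] by (simp add: algebra_simps)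

lemma qdilog_shift:
  assumes "is_qdilog b phi S" and "w \<notin> S" and "w + \<i> * b \<notin> S"
  shows "phi (w + \<i> * b) = (1 + exp (2 * of_real pi * (w + \<i> * b / 2) * b)) * phi w"
proof -
  have "\<And>z. z + \<i> * b / 2 \<notin> S \<Longrightarrow> z - \<i> * b / 2 \<notin> S \<Longrightarrow>
        phi (z + \<i> * b / 2) = (1 + exp (2 * of_real pi * z * b)) * phi (z - \<i> * b / 2)"
    using assms(1) unfolding is_qdilog_def by blast
  from this[of "w + \<i> * b / 2"] show ?thesis
    using assms(2,3) by (simp add: algebra_simps)
qed

text \<open>The offset \<open>c_b\<close> is tuned so that \<open>2\<pi> (c_b - i b/2) b = i\<pi>\<close>; hence the
  factors in the functional equation, evaluated around \<open>\<plusminus>c_b\<close>, are pure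
  exponentials with a sign flip.\<close>
lemma cb_offset_exp:
  assumes "b \<noteq> 0"
  shows "exp (2 * of_real pi * (w - cb b + \<i> * b / 2) * b) = - exp (2 * of_real pi * b * w)"
    and "exp (2 * of_real pi * (w + cb b - \<i> * b / 2) * b) = - exp (2 * of_real pi * b * w)"
proof -
  have offset: "2 * of_real pi * (cb b - \<i> * b / 2) * b = \<i> * of_real pi"
    unfolding cb_def using assms by (simp add: field_simps)
  have exp_i_pi: "exp (\<i> * of_real pi) = -1" "exp (- (\<i> * of_real pi)) = -1"
    by (simp_all add: exp_minus)
  have "2 * of_real pi * (w - cb b + \<i> * b / 2) * b
        = 2 * of_real pi * b * w - 2 * of_real pi * (cb b - \<i> * b / 2) * b"
       "2 * of_real pi * (w + cb b - \<i> * b / 2) * b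
        = 2 * of_real pi * b * w + 2 * of_real pi * (cb b - \<i> * b / 2) * b"
    by (simp_all add: algebra_simps)
  then show "exp (2 * of_real pi * (w - cb b + \<i> * b / 2) * b) = - exp (2 * of_real pi * b * w)"
       and "exp (2 * of_real pi * (w + cb b - \<i> * b / 2) * b) = - exp (2 * of_real pi * b * w)"
    unfolding offset by (simp_all add: exp_diff exp_add exp_i_pi)
qed

lemma alpha_shift:
  assumes "b \<noteq> 0" and "is_qdilog b phi S"
    and "alpha_regular b phi S s x" and "alpha_regular b phi S s (x - \<i> * b)"
  defines "u \<equiv> exp (2 * of_real pi * b * of_real s)"
      and "v \<equiv> exp (2 * of_real pi * b * x)"
  shows "alpha b phi s (x - \<i> * b) = alpha b phi s x * ((1 - u / v) * (1 - u * v) / u)"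
proof -
  define A where "A = of_real s - x - cb b"
  define B where "B = of_real s + x + cb b"
  have reg: "A \<notin> S" "B \<notin> S" "phi B \<noteq> 0"
    using assms(3) unfolding alpha_regular_def A_def B_def by auto
  have reg_shift: "A + \<i> * b \<notin> S" "B - \<i> * b \<notin> S"
    using assms(4) unfolding alpha_regular_def A_def B_def by (auto simp: algebra_simps)
  have "exp (2 * of_real pi * (A + \<i> * b / 2) * b) = - exp (2 * of_real pi * b * (of_real s - x))"
    using cb_offset_exp(1)[OF assms(1), of "of_real s - x"] by (simp add: A_def)
  then have numerator: "phi (A + \<i> * b) = (1 - u / v) * phi A"
    using qdilog_shift[OF assms(2) reg(1)] reg_shift(1)
    by (simp add: u_def v_def right_diff_distrib exp_diff)
  have "exp (2 * of_real pi * (B - \<i> * b + \<i> * b / 2) * b) = - exp (2 * of_real pi * b * (of_real s + x))"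
    using cb_offset_exp(2)[OF assms(1), of "of_real s + x"] by (simp add: B_def algebra_simps)
  then have denominator: "phi B = (1 - u * v) * phi (B - \<i> * b)"
    using qdilog_shift[OF assms(2) reg_shift(2)] reg(2)
    by (simp add: u_def v_def distrib_left exp_add)
  have plane_wave: "exp (- 2 * of_real pi * \<i> * (x - \<i> * b + cb b) * of_real s)
      = exp (- 2 * of_real pi * \<i> * (x + cb b) * of_real s) / u"
  proof -
    have "- 2 * of_real pi * \<i> * (x - \<i> * b + cb b) * of_real s
       = - 2 * of_real pi * \<i> * (x + cb b) * of_real s - 2 * of_real pi * b * of_real s"
      by (simp add: algebra_simps)
    then show ?thesis unfolding u_def by (simp add: exp_diff)
  qed
  have "1 - u * v \<noteq> 0"
    using denominator reg(3) by auto
  then have shifted_denominator: "phi (B - \<i> * b) = phi B / (1 - u * v)"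
    using denominator by (simp add: field_simps)
  have "alpha b phi s (x - \<i> * b) = phi (A + \<i> * b) / phi (B - \<i> * b)
        * exp (- 2 * of_real pi * \<i> * (x - \<i> * b + cb b) * of_real s)"
    unfolding alpha_def A_def B_def by (simp add: algebra_simps)
  also have "\<dots> = alpha b phi s x * ((1 - u / v) * (1 - u * v) / u)"
    unfolding alpha_def A_def[symmetric] B_def[symmetric]
      numerator shifted_denominator plane_wave
    by (simp add: u_def)
  finally show ?thesis .
qed

lemma shift_factor_identity:
  fixes u v :: complex
  assumes "u \<noteq> 0" and "v \<noteq> 0"
  shows "(1 - u / v) * (1 - u * v) / u + (v + 1 / v) = u + 1 / u"
  using assms by (simp add: field_simps)

theorem mainTheorem15:
  fixes b :: complex and phi :: "complex \<Rightarrow> complex" and S :: "complex set"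
    and s :: real and x :: complex
  assumes "Re b > 0" and "Im b \<ge> 0"
    and "is_qdilog b phi S"
    and "s \<ge> 0"
    and "alpha_regular b phi S s x" and "alpha_regular b phi S s (x - \<i> * b)"
  shows "alpha b phi s (x - \<i> * b) + 2 * cosh (2 * of_real pi * b * x) * alpha b phi s x
           = 2 * cosh (2 * of_real pi * b * of_real s) * alpha b phi s x"
proof -
  define u where "u = exp (2 * of_real pi * b * of_real s)"
  define v where "v = exp (2 * of_real pi * b * x)"
  have "b \<noteq> 0" using assms(1) by auto
  then have shift: "alpha b phi s (x - \<i> * b) = alpha b phi s x * ((1 - u / v) * (1 - u * v) / u)"
    using alpha_shift[OF _ assms(3,5,6)] by (simp add: u_def v_def)
  have cosh_exp: "2 * cosh (2 * of_real pi * b * x) = v + 1 / v"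
    "2 * cosh (2 * of_real pi * b * of_real s) = u + 1 / u"
    unfolding two_cosh_eq_exp u_def v_def by (simp_all add: exp_minus field_simps)
  have "u \<noteq> 0" "v \<noteq> 0" by (simp_all add: u_def v_def)
  have "alpha b phi s (x - \<i> * b) + 2 * cosh (2 * of_real pi * b * x) * alpha b phi s x
        = ((1 - u / v) * (1 - u * v) / u + (v + 1 / v)) * alpha b phi s x"
    unfolding shift cosh_exp by (simp add: algebra_simps)
  also have "\<dots> = 2 * cosh (2 * of_real pi * b * of_real s) * alpha b phi s x"
    unfolding cosh_exp shift_factor_identity[OF \<open>u \<noteq> 0\<close> \<open>v \<noteq> 0\<close>] ..
  finally show ?thesis .
qed

end
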